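(* Let $n\ge1$, $C>0$, $\sigma:\mathbb{R}\to\mathbb{R}$ a sigmoidal function, and let $\mathbf{A},\mathbf{B}\in\mathbb{R}^{n\times n}$ be non-singular diagonalizable matrices such that (i) $\mathbf{A}^q=a\mathbf{I}$ for some positive integer $q\le n$ and scalar $a\ne0$; (ii) $\mathbf{I}-a\mathbf{B}^q$ is nonsingular; (iii) the eigenvalues of $\mathbf{B}$ have pairwise distinct absolute values. Let $$G_\sigma=\{\mathbf{x}\mapsto\alpha\,\sigma(\mathbf{y}^T\mathbf{x}+\theta):\ |\alpha|\le 2C,\ \mathbf{y}\in\mathbb{R}^n,\ \theta\in\mathbb{R}\},$$ let $G^k_\sigma$ be the set of functions that are sums of at most $k$ elements of $G_\sigma$, and let $S^{kn}_\sigma$ be the set of functions $$\mathbf{x}\mapsto\sum_{j=1}^{kn}\alpha_j\,\sigma(\mathbf{y}_j^T\mathbf{x}+\theta_j)$$ with $|\alpha_j|\le 2C$, $\mathbf{y}_j\in\mathbb{R}^n$, $\theta_j\in\mathbb{R}$, such that for every $i=1,\dots,k$ the matrix $\mathbf{M}_i=[\mathbf{y}_{(i-1)n+1}|\mathbf{y}_{(i-1)n+2}|\cdots|\mathbf{y}_{in}]\in\mathbb{R}^{n\times n}$ satisfies $\mathbf{M}_i-\mathbf{A}\mathbf{M}_i\mathbf{B}=\mathbf{g}_i\mathbf{h}_i^T$ for some $\mathbf{g}_i,\mathbf{h}_i\in\mathbb{R}^n$. Then for every $k\ge1$, $G^k_\sigma\subseteq S^{kn}_\sigma$.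
   Context: A sigmoidal function is a bounded measurable function $\sigma:\mathbb{R}\to\mathbb{R}$ with $\sigma(t)\to1$ as $t\to+\infty$ and $\sigma(t)\to0$ as $t\to-\infty$. Functions are considered on $\mathbb{R}^n$ (or a ball in $\mathbb{R}^n$). *)

theory Defs
  imports "HOL-Analysis.Analysis"
begin

definition sigmoidal :: "(real \<Rightarrow> real) \<Rightarrow> bool" where
  "sigmoidal \<sigma> \<longleftrightarrow> bounded (range \<sigma>) \<and> \<sigma> \<in> borel_measurable borel \<and>
     (\<sigma> \<longlongrightarrow> 1) at_top \<and> (\<sigma> \<longlongrightarrow> 0) at_bot"

fun mpow :: "'a::semiring_1 ^'n^'n \<Rightarrow> nat \<Rightarrow> 'a^'n^'n" where
  "mpow M 0 = mat 1"
| "mpow M (Suc k) = M ** mpow M k"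

definition cmat :: "real^'n^'m \<Rightarrow> complex^'n^'m" where
  "cmat M = (\<chi> i j. complex_of_real (M $ i $ j))"

definition diagm :: "('n \<Rightarrow> 'a::zero) \<Rightarrow> 'a^'n^'n" where
  "diagm d = (\<chi> i j. if i = j then d i else 0)"

text \<open>A real matrix is diagonalizable (over the complex numbers) with eigenvalue list d
  (eigenvalues with multiplicity, indexed by 'n).\<close>
definition diagonalizable_with :: "real^'n^'n \<Rightarrow> ('n \<Rightarrow> complex) \<Rightarrow> bool" where
  "diagonalizable_with M d \<longleftrightarrow>
     (\<exists>P::complex^'n^'n. invertible P \<and> cmat M = P ** diagm d ** matrix_inv P)"

definition diagonalizable :: "real^'n^'n \<Rightarrow> bool" where
  "diagonalizable M \<longleftrightarrow> (\<exists>d. diagonalizable_with M d)"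

definition outer :: "real^'n \<Rightarrow> real^'n \<Rightarrow> real^'n^'n" where
  "outer g h = (\<chi> r c. g $ r * h $ c)"

definition G_sig :: "real \<Rightarrow> (real \<Rightarrow> real) \<Rightarrow> (real^'n \<Rightarrow> real) set" where
  "G_sig C \<sigma> = {(\<lambda>x. \<alpha> * \<sigma> (y \<bullet> x + \<theta>)) | \<alpha> y \<theta>. \<bar>\<alpha>\<bar> \<le> 2 * C}"

definition G_sig_k :: "nat \<Rightarrow> real \<Rightarrow> (real \<Rightarrow> real) \<Rightarrow> (real^'n \<Rightarrow> real) set" where
  "G_sig_k k C \<sigma> = {(\<lambda>x. \<Sum>j<m. g j x) | m g. m \<le> k \<and> (\<forall>j<m. g j \<in> G_sig C \<sigma>)}"

text \<open>S^{kn}: the kn neurons are indexed by pairs (i, c), i < k the block, c :: 'n the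
  column of the block matrix M_i = [y_(i,c)]_c.\<close>
definition S_sig :: "nat \<Rightarrow> real \<Rightarrow> (real \<Rightarrow> real) \<Rightarrow> real^'n^'n \<Rightarrow> real^'n^'n
                      \<Rightarrow> (real^'n \<Rightarrow> real) set" where
  "S_sig k C \<sigma> A B = {(\<lambda>x. \<Sum>i<k. \<Sum>c\<in>UNIV. \<alpha> i c * \<sigma> (y i c \<bullet> x + \<theta> i c)) | \<alpha> y \<theta>.
      (\<forall>i<k. \<forall>c. \<bar>\<alpha> i c\<bar> \<le> 2 * C) \<and>
      (\<forall>i<k. let M = (\<chi> r c. y i c $ r) in \<exists>g h. M - A ** M ** B = outer g h)}"

end

theory Submission
  imports Defs
begin

text \<open>If \<open>v\<close> is a real left eigenvector of \<open>B\<close>, say \<open>v B = l v\<close>, then every block of the form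
  \<open>M = y v\<^sup>T\<close> satisfies \<open>M - A M B = (y - l A y) v\<^sup>T\<close>. So a single neuron \<open>\<alpha> \<sigma>(y\<^sup>T x + \<theta>)\<close> of
  \<open>G\<sigma>\<close> fills a block of \<open>n\<close> neurons with weight vectors \<open>v\<^sub>c y\<close>, output weight \<open>\<alpha>\<close> at a column
  \<open>c\<^sub>0\<close> with \<open>v\<^sub>c\<^sub>0 = 1\<close> and \<open>0\<close> elsewhere. Such a real left eigenvector exists: if \<open>u\<close> is a
  complex left eigenvector for the eigenvalue \<open>\<lambda>\<close>, then its conjugate is one for \<open>\<lambda>\<close>'s conjugate,
  which is therefore an eigenvalue of the same modulus; as the moduli are pairwise distinct,
  \<open>\<lambda>\<close> is real, and the real or imaginary part of \<open>u\<close> is the desired vector.\<close>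

lemma row_matrix_matrix_mult: "(X ** Y) $ i = X $ i v* Y"
  by (simp add: matrix_matrix_mult_def vector_matrix_mult_def vec_eq_iff mult.commute)

lemma row_diagm_matrix_mult: "(diagm d ** Q) $ i = d i *s Q $ i"
  by (simp add: diagm_def matrix_matrix_mult_def vec_eq_iff if_distrib[where f = "\<lambda>a. a * _"]
      cong: if_cong)

lemma vector_diagm_mult_component: "(z v* diagm d) $ k = z $ k * d k"
  by (simp add: diagm_def vector_matrix_mult_def if_distrib sum.delta' cong: if_cong)

lemma invertible_matrix_inv:
  assumes "invertible P"
  shows "P ** matrix_inv P = mat 1" and "matrix_inv P ** P = mat 1"
  using someI_ex[OF assms[unfolded invertible_def]] unfolding matrix_inv_def by auto

lemma diagonalized_left_eigenvector:
  fixes P :: "'a::field^'n^'n"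
  assumes P: "invertible P" and M: "M = P ** diagm d ** matrix_inv P"
  shows "\<exists>u. u \<noteq> 0 \<and> u v* M = d i *s u"
proof -
  define Q where "Q = matrix_inv P"
  have QP: "Q ** P = mat 1"
    using invertible_matrix_inv[OF P] by (simp add: Q_def)
  have "Q ** M = (Q ** P) ** diagm d ** Q"
    by (simp add: M Q_def[symmetric] matrix_mul_assoc)
  then have QM: "Q ** M = diagm d ** Q"
    by (simp add: QP)
  have "Q $ i v* M = d i *s Q $ i"
    by (metis QM row_matrix_matrix_mult row_diagm_matrix_mult)
  moreover have "Q $ i \<noteq> 0"
  proof
    assume "Q $ i = 0"
    then have "(Q ** P) $ i $ i = 0" by (simp add: row_matrix_matrix_mult)
    then show False by (simp add: QP mat_def)
  qed
  ultimately show ?thesis by blast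
qed

lemma diagonalized_left_eigenvalue:
  fixes P :: "'a::field^'n^'n"
  assumes P: "invertible P" and M: "M = P ** diagm d ** matrix_inv P"
    and "z \<noteq> 0" and z: "z v* M = \<mu> *s z"
  shows "\<exists>k. d k = \<mu>"
proof -
  define w where "w = z v* P"
  have "w v* matrix_inv P = z"
    by (simp add: w_def vector_matrix_mul_assoc invertible_matrix_inv[OF P])
  with \<open>z \<noteq> 0\<close> have "w \<noteq> 0"
    by auto
  then obtain k where wk: "w $ k \<noteq> 0"
    by (auto simp: vec_eq_iff)
  have "w v* diagm d = z v* (P ** diagm d ** (matrix_inv P ** P))"
    by (simp add: w_def vector_matrix_mul_assoc invertible_matrix_inv[OF P])
  also have "\<dots> = (z v* M) v* P"
    by (simp add: M matrix_mul_assoc vector_matrix_mul_assoc)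
  also have "\<dots> = \<mu> *s w"
    by (simp add: z w_def scalar_vector_matrix_assoc)
  finally have "w $ k * d k = \<mu> * w $ k"
    by (metis vector_diagm_mult_component vector_smult_component)
  with wk show ?thesis
    by (auto simp: mult.commute)
qed

lemma cmat_left_eigenvector_cnj:
  assumes "u v* cmat B = \<mu> *s u"
  shows "(\<chi> c. cnj (u $ c)) v* cmat B = cnj \<mu> *s (\<chi> c. cnj (u $ c))"
proof -
  have "((\<chi> c. cnj (u $ c)) v* cmat B) $ c = cnj ((u v* cmat B) $ c)" for c
    by (simp add: vector_matrix_mult_def cmat_def)
  then show ?thesis
    using assms by (simp add: vec_eq_iff)
qed

lemma cmat_real_left_eigenvector:
  assumes "u \<noteq> 0" and u: "u v* cmat B = complex_of_real l *s u"
  shows "\<exists>v. v \<noteq> 0 \<and> v v* B = l *\<^sub>R v"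
proof -
  have u_comp: "(\<Sum>r\<in>UNIV. u $ r * complex_of_real (B $ r $ c)) = complex_of_real l * u $ c" for c
    using arg_cong[OF u, of "\<lambda>w. w $ c"] by (simp add: vector_matrix_mult_def cmat_def)
  define vr where "vr = (\<chi> c. Re (u $ c))"
  define vi where "vi = (\<chi> c. Im (u $ c))"
  have "vr v* B = l *\<^sub>R vr"
    using arg_cong[OF u_comp, of Re]
    by (simp add: vec_eq_iff vr_def vector_matrix_mult_def Re_sum)
  moreover have "vi v* B = l *\<^sub>R vi"
    using arg_cong[OF u_comp, of Im]
    by (simp add: vec_eq_iff vi_def vector_matrix_mult_def Im_sum)
  moreover have "vr \<noteq> 0 \<or> vi \<noteq> 0"
    using \<open>u \<noteq> 0\<close> by (auto simp: vr_def vi_def vec_eq_iff complex_eq_iff)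
  ultimately show ?thesis by blast
qed

lemma diagonalizable_with_distinct_moduli_real_left_eigenvector:
  assumes B: "diagonalizable_with B d"
    and distinct: "\<And>i j. i \<noteq> j \<Longrightarrow> cmod (d i) \<noteq> cmod (d j)"
  shows "\<exists>v l. v \<noteq> 0 \<and> v v* B = l *\<^sub>R v"
proof -
  obtain P where P: "invertible P" and BP: "cmat B = P ** diagm d ** matrix_inv P"
    using B unfolding diagonalizable_with_def by blast
  fix i
  obtain u where "u \<noteq> 0" and u: "u v* cmat B = d i *s u"
    using diagonalized_left_eigenvector[OF P BP] by blast
  have "(\<chi> c. cnj (u $ c)) \<noteq> 0"
    using \<open>u \<noteq> 0\<close> by (auto simp: vec_eq_iff)
  then obtain k where dk: "d k = cnj (d i)"
    using diagonalized_left_eigenvalue[OF P BP _ cmat_left_eigenvector_cnj[OF u]] by blast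
  then have "k = i"
    using distinct by fastforce
  with dk have "d i = complex_of_real (Re (d i))"
    by (simp add: complex_eq_iff)
  with u have "u v* cmat B = complex_of_real (Re (d i)) *s u"
    by simp
  then show ?thesis
    using cmat_real_left_eigenvector[OF \<open>u \<noteq> 0\<close>] by blast
qed

lemma exists_normalized_left_eigenvector:
  fixes B :: "real^'n^'n"
  assumes "v \<noteq> 0" and "v v* B = l *\<^sub>R v"
  obtains w c0 where "w $ c0 = 1" and "w v* B = l *\<^sub>R w"
proof -
  obtain c0 where "v $ c0 \<noteq> 0"
    using assms(1) by (auto simp: vec_eq_iff)
  then show ?thesis
    using assms(2) that[of "(1 / v $ c0) *\<^sub>R v" c0]
    by (simp add: scaleR_vector_matrix_assoc)
qed

lemma matrix_mult_outer: "A ** outer g h = outer (A *v g) h"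
  by (simp add: outer_def matrix_matrix_mult_def matrix_vector_mult_def vec_eq_iff
      sum_distrib_right mult.assoc)

lemma outer_matrix_mult: "outer g h ** B = outer g (h v* B)"
  by (simp add: outer_def matrix_matrix_mult_def vector_matrix_mult_def vec_eq_iff
      sum_distrib_left mult.assoc)

lemma outer_left_eigenvector_residual:
  assumes "v v* B = l *\<^sub>R v"
  shows "outer y v - A ** outer y v ** B = outer (y - l *\<^sub>R (A *v y)) v"
proof -
  have "A ** outer y v ** B = outer (A *v y) (l *\<^sub>R v)"
    by (simp add: matrix_mult_outer outer_matrix_mult assms)
  also have "\<dots> = outer (l *\<^sub>R (A *v y)) v"
    by (simp add: outer_def vec_eq_iff)
  finally show ?thesis
    by (simp add: outer_def vec_eq_iff algebra_simps)
qed

lemma G_sig_k_subset_S_sig_if_left_eigenvector: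
  fixes A B :: "real^'n^'n"
  assumes "0 \<le> C" and v_c0: "v $ c0 = 1" and vB: "v v* B = l *\<^sub>R v"
  shows "G_sig_k k C \<sigma> \<subseteq> S_sig k C \<sigma> A B"
proof
  fix f :: "real^'n \<Rightarrow> real"
  assume "f \<in> G_sig_k k C \<sigma>"
  then obtain m g where f: "f = (\<lambda>x. \<Sum>j<m. g j x)" and "m \<le> k"
    and g: "\<forall>j<m. g j \<in> G_sig C \<sigma>"
    unfolding G_sig_k_def by blast
  have "\<forall>j. \<exists>\<alpha>' y' \<theta>. j < m \<longrightarrow> \<bar>\<alpha>'\<bar> \<le> 2 * C \<and> g j = (\<lambda>x. \<alpha>' * \<sigma> (y' \<bullet> x + \<theta>))"
    using g unfolding G_sig_def by blast
  then obtain \<alpha>' y' \<theta> where bound': "\<And>j. j < m \<Longrightarrow> \<bar>\<alpha>' j\<bar> \<le> 2 * C"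
    and g_eq: "\<And>j. j < m \<Longrightarrow> g j = (\<lambda>x. \<alpha>' j * \<sigma> (y' j \<bullet> x + \<theta> j))"
    by metis
  define \<alpha> where "\<alpha> j c = (if j < m \<and> c = c0 then \<alpha>' j else 0)" for j c
  define y where "y j c = (if j < m then v $ c *\<^sub>R y' j else 0)" for j c
  have block: "(\<Sum>c\<in>UNIV. \<alpha> j c * \<sigma> (y j c \<bullet> x + \<theta> j)) = (if j < m then g j x else 0)"
    for j x
  proof (cases "j < m")
    case True
    have "(\<Sum>c\<in>UNIV. \<alpha> j c * \<sigma> (y j c \<bullet> x + \<theta> j))
        = (\<Sum>c\<in>UNIV. if c = c0 then \<alpha>' j * \<sigma> (y' j \<bullet> x + \<theta> j) else 0)"
      by (rule sum.cong) (auto simp: \<alpha>_def y_def True v_c0)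
    then show ?thesis
      by (simp add: True g_eq)
  qed (simp add: \<alpha>_def)
  have "f = (\<lambda>x. \<Sum>j<k. \<Sum>c\<in>UNIV. \<alpha> j c * \<sigma> (y j c \<bullet> x + \<theta> j))"
  proof
    fix x
    have "(\<Sum>j<k. if j < m then g j x else 0) = (\<Sum>j<m. if j < m then g j x else 0)"
      by (rule sum.mono_neutral_right) (use \<open>m \<le> k\<close> in auto)
    then show "f x = (\<Sum>j<k. \<Sum>c\<in>UNIV. \<alpha> j c * \<sigma> (y j c \<bullet> x + \<theta> j))"
      by (simp add: block f)
  qed
  moreover have "\<forall>j<k. \<forall>c. \<bar>\<alpha> j c\<bar> \<le> 2 * C"
    using bound' \<open>0 \<le> C\<close> by (simp add: \<alpha>_def)
  moreover have "\<forall>j<k. \<exists>g h. (\<chi> r c. y j c $ r) - A ** (\<chi> r c. y j c $ r) ** B = outer g h"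
  proof (intro allI impI)
    fix j
    have "(\<chi> r c. y j c $ r) = outer (if j < m then y' j else 0) v"
      by (simp add: y_def outer_def vec_eq_iff mult.commute)
    then show "\<exists>g h. (\<chi> r c. y j c $ r) - A ** (\<chi> r c. y j c $ r) ** B = outer g h"
      by (intro exI) (simp only: outer_left_eigenvector_residual[OF vB])
  qed
  ultimately show "f \<in> S_sig k C \<sigma> A B"
    unfolding S_sig_def Let_def
    by (intro CollectI exI[of _ \<alpha>] exI[of _ y] exI[of _ "\<lambda>j c. \<theta> j"]) simp
qed

theorem lemma3:
  fixes C :: real and \<sigma> :: "real \<Rightarrow> real"
    and A B :: "real^'n^'n" and q :: nat and a :: real and k :: nat
  assumes "C > 0"
    and "sigmoidal \<sigma>"
    and "invertible A" and "invertible B"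
    and "diagonalizable A"
    and "0 < q" and "q \<le> CARD('n)" and "a \<noteq> 0" and "mpow A q = mat a"
    and "invertible (mat 1 - a *\<^sub>R mpow B q)"
    and "diagonalizable_with B d" and "\<And>i j. i \<noteq> j \<Longrightarrow> cmod (d i) \<noteq> cmod (d j)"
    and "k \<ge> 1"
  shows "G_sig_k k C \<sigma> \<subseteq> S_sig k C \<sigma> A B"
proof -
  obtain v l where "v \<noteq> 0" and "v v* B = l *\<^sub>R v"
    using diagonalizable_with_distinct_moduli_real_left_eigenvector[OF assms(11,12)] by blast
  then obtain w c0 where "w $ c0 = 1" and "w v* B = l *\<^sub>R w"
    by (rule exists_normalized_left_eigenvector)
  moreover have "0 \<le> C"
    using \<open>C > 0\<close> by simp
  ultimately show ?thesis
    using G_sig_k_subset_S_sig_if_left_eigenvector by blast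
qed

end
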